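(* Let $z\in\mathcal F_\infty$, and write its cycles in $\mathbb P$ as $(a_i,b_i)$ with $a_i<b_i$ and $a_1<a_2<\cdots$. Let $u$ be the permutation of $\mathbb P$ whose one-line representation is $a_1b_1a_2b_2a_3b_3\cdots$, and let $\beta=u^{-1}$. Then the set of FPF-visible inversions of $z$ equals $\mathrm{Inv}(\beta)=\{(i,j):i<j,\ \beta(i)>\beta(j)\}$.
   Context: Let $S_\infty$ be the group of finitely supported permutations of $\mathbb P=\{1,2,\dots\}$. Let $\Theta(i)=i-(-1)^i$ and $\mathcal F_\infty=\{w^{-1}\Theta w:w\in S_\infty\}$. A pair $(i,j)\in\mathbb Z\times\mathbb Z$ is an FPF-visible inversion of $z$ if $i<j$ and $z(j)<\min\{i,z(i)\}$. *)

theory Defs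
  imports Main
begin

text \<open>Permutations of P = {1,2,...} are modelled as functions nat => nat that
  fix 0 and restrict to bijections of {1,2,...}.\<close>

definition Theta :: "nat \<Rightarrow> nat" where
  "Theta i = (if i = 0 then 0 else if even i then i - 1 else i + 1)"

definition S_inf :: "(nat \<Rightarrow> nat) set" where
  "S_inf = {w. bij w \<and> w 0 = 0 \<and> finite {i. w i \<noteq> i}}"

definition F_inf :: "(nat \<Rightarrow> nat) set" where
  "F_inf = {inv w \<circ> Theta \<circ> w | w. w \<in> S_inf}"

text \<open>FPF-visible inversions (restricted to positive indices, where z is defined).\<close>
definition fpf_visible_inv :: "(nat \<Rightarrow> nat) \<Rightarrow> (nat \<times> nat) set" where
  "fpf_visible_inv z = {(i, j). 0 < i \<and> i < j \<and> z j < min i (z i)}"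

definition Inv :: "(nat \<Rightarrow> nat) \<Rightarrow> (nat \<times> nat) set" where
  "Inv \<beta> = {(i, j). 0 < i \<and> i < j \<and> \<beta> i > \<beta> j}"

text \<open>One-line word a_1 b_1 a_2 b_2 ...; sequences a, b are indexed from 0,
  so position 2k+1 holds a k and position 2k+2 holds b k.\<close>
definition one_line :: "(nat \<Rightarrow> nat) \<Rightarrow> (nat \<Rightarrow> nat) \<Rightarrow> nat \<Rightarrow> nat" where
  "one_line a b n = (if n = 0 then 0 else if odd n then a ((n - 1) div 2) else b ((n - 2) div 2))"

end

theory Submission
  imports Defs
begin

text \<open>Elements of F_inf are involutions, so z swaps a_k and b_k. Let i < j lie in the cycles
  k and l. If j = a_l then z j = b_l > j > i, so (i, j) is not visible; and j comes after i in the
  word a_1 b_1 a_2 b_2 ... (if i = b_k then a_k < i < a_l forces k < l). If j = b_l then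
  min i (z i) = a_k and z j = a_l, so (i, j) is visible iff l < k, which is exactly when b_l
  (position 2l + 2) precedes i (position 2k + 1 or 2k + 2).\<close>

lemma Theta_Theta [simp]: "Theta (Theta i) = i"
  by (cases "even i") (auto simp: Theta_def elim: evenE)

lemma F_inf_involution:
  assumes "z \<in> F_inf"
  shows "z (z x) = x"
proof -
  from assms obtain w where w: "bij w" "z = inv w \<circ> Theta \<circ> w"
    unfolding F_inf_def S_inf_def by auto
  then show ?thesis
    by (simp add: bij_is_surj bij_is_inj surj_f_inv_f)
qed

lemma one_line_0 [simp]: "one_line a b 0 = 0"
  and one_line_odd [simp]: "one_line a b (2 * k + 1) = a k"
  and one_line_even [simp]: "one_line a b (2 * k + 2) = b k"
  by (simp_all add: one_line_def)

lemma nat_cases_odd_even: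
  obtains "n = 0" | k where "n = 2 * k + 1" | k where "n = (2 * k + 2 :: nat)"
proof (cases "odd n")
  case True
  then show ?thesis using that(2) by (metis oddE)
next
  case False
  then obtain m where "n = 2 * m" by blast
  then show ?thesis using that(1) that(3)[of "m - 1"] by (cases m) auto
qed

lemma inj_one_line:
  assumes "inj a" "inj b" "\<And>k l. a k \<noteq> b l" "\<And>k. 0 < a k" "\<And>k. 0 < b k"
  shows "inj (one_line a b)"
proof (rule injI)
  fix n m
  assume eq: "one_line a b n = one_line a b m"
  show "n = m"
  proof (cases n rule: nat_cases_odd_even; cases m rule: nat_cases_odd_even)
  qed (use eq assms in \<open>simp_all only: one_line_0 one_line_odd one_line_even;
         metis injD less_not_refl2 less_not_refl3\<close>)+
qed

lemma inv_one_line_odd: "inj (one_line a b) \<Longrightarrow> inv (one_line a b) (a k) = 2 * k + 1"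
  and inv_one_line_even: "inj (one_line a b) \<Longrightarrow> inv (one_line a b) (b k) = 2 * k + 2"
  by (metis inv_f_f one_line_odd, metis inv_f_f one_line_even)

lemma involution_cycle_ends_distinct:
  fixes a b :: "'a \<Rightarrow> 'b :: linorder"
  assumes "\<And>x. z (z x) = x" "\<And>k. a k < b k \<and> z (a k) = b k"
  shows "a k \<noteq> b l"
proof
  assume "a k = b l"
  then have "b k = a l" using assms by metis
  moreover have "a k < b k" "a l < b l" using assms(2) by auto
  ultimately show False using \<open>a k = b l\<close> by (metis less_asym)
qed

lemma visible_iff_one_line_inversion:
  assumes inv: "\<And>x. z (z x) = x" and cyc: "\<And>k. 0 < a k \<and> a k < b k \<and> z (a k) = b k"
    and mono: "strict_mono a"
    and i: "i = a k \<or> i = b k" and j: "j = a l \<or> j = b l" and "i < j"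
  shows "z j < min i (z i) \<longleftrightarrow> inv (one_line a b) j < inv (one_line a b) i"
proof -
  have zb: "z (b m) = a m" for m using inv cyc by metis
  have "inj a" using mono strict_mono_imp_inj_on by blast
  moreover have "inj b" by (metis zb \<open>inj a\<close> injD injI)
  ultimately have "inj (one_line a b)"
    using cyc involution_cycle_ends_distinct[OF inv, of a b]
    by (intro inj_one_line) (auto intro: less_trans)
  note pos = inv_one_line_odd[OF this] inv_one_line_even[OF this]
  have a_less: "a m < a n \<longleftrightarrow> m < n" for m n using mono strict_mono_less by blast
  show ?thesis
    using i j \<open>i < j\<close> cyc[of k] cyc[of l] zb[of k] zb[of l] a_less[of k l] a_less[of l k]
    by (auto simp: pos)
qed

theorem lemma3p4:
  fixes z a b :: "nat \<Rightarrow> nat"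
  assumes "z \<in> F_inf"
    and "\<And>k. 0 < a k \<and> a k < b k \<and> z (a k) = b k"
    and "strict_mono a"
    and "\<And>i. 0 < i \<Longrightarrow> \<exists>k. i = a k \<or> i = b k"
  shows "fpf_visible_inv z = Inv (inv (one_line a b))"
proof -
  have "z j < min i (z i) \<longleftrightarrow> inv (one_line a b) j < inv (one_line a b) i"
    if "0 < i" "i < j" for i j
  proof -
    obtain k l where "i = a k \<or> i = b k" "j = a l \<or> j = b l"
      using assms(4) \<open>0 < i\<close> \<open>i < j\<close> by (metis gr0I less_nat_zero_code)
    then show ?thesis
      using visible_iff_one_line_inversion[OF F_inf_involution[OF assms(1)] assms(2,3)] \<open>i < j\<close>
      by blast
  qed
  then show ?thesis
    unfolding fpf_visible_inv_def Inv_def by auto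
qed

end
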